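(* Let $\lambda_j\ge 0$ ($j=1,\dots,k$), not all zero, and $\gamma_i>0$ ($i=1,\dots,n$). Let $(\{\hat\theta'_i\}_{i=1}^n,\{\hat w_j\}_{j=1}^k,\hat{\bar w})$ be a minimizer of $$F_{MTL}(\{\theta_i\},\{w_j\},\bar w)=\sum_{j=1}^k\Big(\sum_{i\in\mathcal I_j}\Big(f_i(\theta_i)+\frac{\gamma_i}{2}\|\theta_i-w_j\|^2\Big)+\frac{\lambda_j}{2}\|w_j-\bar w\|^2\Big)$$ over $\theta_i\in\mathbb R^d$, $w_j\in\mathbb R^d$, $\bar w\in\mathbb R^d$. Set $\alpha_j=\frac{\lambda_j}{\lambda_j+\sum_{i\in\mathcal I_j}\gamma_i}$ for $j=1,\dots,k$, and let $\{\hat\theta_i\}_{i=1}^n$ be the unique minimizer of the objective $F$ (defined in the context) with these $\alpha_j$ and $\gamma_i$. Then $\hat\theta_i=\hat\theta'_i$ for all $i=1,\dots,n$.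
   Context: Clients $1,\dots,n$ are partitioned into nonempty disjoint clusters $\mathcal I_1,\dots,\mathcal I_k$; $d\ge1$. Each $f_i:\mathbb R^d\to\mathbb R$ is differentiable, $\mu$-strongly convex and $L$-smooth ($0<\mu\le L$). Given weights $\gamma_i>0$ and $\alpha_j\in[0,1]$ (not all $\alpha_j=0$), for $\Theta=(\theta_1,\dots,\theta_n)$ define $\bar\theta_j=\frac{\sum_{i\in\mathcal I_j}\gamma_i\theta_i}{\sum_{i\in\mathcal I_j}\gamma_i}$, $\bar\theta=\frac{\sum_{j=1}^k\sum_{i\in\mathcal I_j}\alpha_j\gamma_i\theta_i}{\sum_{j=1}^k\sum_{i\in\mathcal I_j}\alpha_j\gamma_i}$, and $$F(\Theta)=\sum_{j=1}^k\sum_{i\in\mathcal I_j}\Big(f_i(\theta_i)+\frac{(1-\alpha_j)\gamma_i}{2}\|\theta_i-\bar\theta_j\|^2+\frac{\alpha_j\gamma_i}{2}\|\theta_i-\bar\theta\|^2\Big).$$ *)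

theory Defs
  imports "HOL-Analysis.Analysis"
begin

definition strongly_convex :: "real \<Rightarrow> ('a::real_normed_vector \<Rightarrow> real) \<Rightarrow> bool" where
  "strongly_convex \<mu> f \<longleftrightarrow>
     (\<forall>x y t. 0 \<le> t \<and> t \<le> 1 \<longrightarrow>
        f (t *\<^sub>R x + (1 - t) *\<^sub>R y)
          \<le> t * f x + (1 - t) * f y - \<mu> / 2 * t * (1 - t) * (norm (x - y))\<^sup>2)"

definition L_smooth :: "real \<Rightarrow> ('a::real_inner \<Rightarrow> real) \<Rightarrow> bool" where
  "L_smooth L f \<longleftrightarrow>
     (\<exists>g. (\<forall>x. (f has_derivative (\<lambda>h. g x \<bullet> h)) (at x)) \<and>
          (\<forall>x y. norm (g x - g y) \<le> L * norm (x - y)))"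

text \<open>Clients are 0..<n, clusters are indexed 0..<k, cluster j is the set I j.\<close>

definition cluster_mean ::
  "(nat \<Rightarrow> nat set) \<Rightarrow> (nat \<Rightarrow> real) \<Rightarrow> (nat \<Rightarrow> 'a::real_vector) \<Rightarrow> nat \<Rightarrow> 'a" where
  "cluster_mean I \<gamma> \<Theta> j = (\<Sum>i\<in>I j. \<gamma> i *\<^sub>R \<Theta> i) /\<^sub>R (\<Sum>i\<in>I j. \<gamma> i)"

definition global_mean ::
  "nat \<Rightarrow> (nat \<Rightarrow> nat set) \<Rightarrow> (nat \<Rightarrow> real) \<Rightarrow> (nat \<Rightarrow> real) \<Rightarrow> (nat \<Rightarrow> 'a::real_vector) \<Rightarrow> 'a" where
  "global_mean k I \<alpha> \<gamma> \<Theta> =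
     (\<Sum>j<k. \<Sum>i\<in>I j. (\<alpha> j * \<gamma> i) *\<^sub>R \<Theta> i) /\<^sub>R (\<Sum>j<k. \<Sum>i\<in>I j. \<alpha> j * \<gamma> i)"

definition F_obj ::
  "nat \<Rightarrow> (nat \<Rightarrow> nat set) \<Rightarrow> (nat \<Rightarrow> 'a::real_normed_vector \<Rightarrow> real) \<Rightarrow> (nat \<Rightarrow> real) \<Rightarrow> (nat \<Rightarrow> real)
   \<Rightarrow> (nat \<Rightarrow> 'a) \<Rightarrow> real" where
  "F_obj k I f \<alpha> \<gamma> \<Theta> =
     (\<Sum>j<k. \<Sum>i\<in>I j.
        f i (\<Theta> i)
        + (1 - \<alpha> j) * \<gamma> i / 2 * (norm (\<Theta> i - cluster_mean I \<gamma> \<Theta> j))\<^sup>2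
        + \<alpha> j * \<gamma> i / 2 * (norm (\<Theta> i - global_mean k I \<alpha> \<gamma> \<Theta>))\<^sup>2)"

definition F_MTL ::
  "nat \<Rightarrow> (nat \<Rightarrow> nat set) \<Rightarrow> (nat \<Rightarrow> 'a::real_normed_vector \<Rightarrow> real) \<Rightarrow> (nat \<Rightarrow> real) \<Rightarrow> (nat \<Rightarrow> real)
   \<Rightarrow> (nat \<Rightarrow> 'a) \<Rightarrow> (nat \<Rightarrow> 'a) \<Rightarrow> 'a \<Rightarrow> real" where
  "F_MTL k I f lam \<gamma> \<theta> w wbar =
     (\<Sum>j<k. (\<Sum>i\<in>I j. f i (\<theta> i) + \<gamma> i / 2 * (norm (\<theta> i - w j))\<^sup>2)
            + lam j / 2 * (norm (w j - wbar))\<^sup>2)"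

end

theory Submission
  imports Defs
begin

text \<open>
  For fixed models \<theta>, F_MTL is a quadratic in the cluster centres w_j and the global centre
  wbar. Completing the square in each w_j (a weighted variance decomposition around the cluster
  mean, with cluster weight \<Gamma>_j = \<Sum>_{i \<in> I_j} \<gamma>_i) and then in wbar leaves exactly F with
  \<alpha>_j = \<lambda>_j / (\<lambda>_j + \<Gamma>_j), plus squares that vanish at the optimal centres. Hence F(\<theta>) is
  the minimum of F_MTL(\<theta>, -, -), and the minimiser of F extends to a minimiser of F_MTL. Since
  F_MTL is \<mu>-strongly convex in \<theta> and convex in the centres, comparing two minimisers with
  their midpoint shows that their models coincide.
\<close>

lemma sum_weighted_sq_dist_decomp:
  fixes x :: "'b \<Rightarrow> 'a::real_inner"
  assumes "sum a S \<noteq> 0"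
  defines "m \<equiv> (\<Sum>i\<in>S. a i *\<^sub>R x i) /\<^sub>R sum a S"
  shows "(\<Sum>i\<in>S. a i * (norm (x i - y))\<^sup>2)
           = (\<Sum>i\<in>S. a i * (norm (x i - m))\<^sup>2) + sum a S * (norm (m - y))\<^sup>2"
proof -
  have "sum a S *\<^sub>R m = (\<Sum>i\<in>S. a i *\<^sub>R x i)"
    using assms by (simp add: m_def)
  then have centred: "(\<Sum>i\<in>S. a i *\<^sub>R (x i - m)) = 0"
    by (simp add: scaleR_diff_right sum_subtractf scaleR_sum_left[symmetric])
  have "(norm (x i - y))\<^sup>2 = (norm (x i - m))\<^sup>2 + 2 * ((x i - m) \<bullet> (m - y)) + (norm (m - y))\<^sup>2" for i
    using dot_norm[of "x i - m" "m - y"] by simp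
  then have "(\<Sum>i\<in>S. a i * (norm (x i - y))\<^sup>2) = (\<Sum>i\<in>S. a i * (norm (x i - m))\<^sup>2)
      + 2 * ((\<Sum>i\<in>S. a i *\<^sub>R (x i - m)) \<bullet> (m - y)) + sum a S * (norm (m - y))\<^sup>2"
    by (simp add: distrib_left sum.distrib sum_distrib_left sum_distrib_right inner_sum_left mult.left_commute)
  then show ?thesis by (simp add: centred)
qed

lemma two_weight_sq_dist_decomp:
  fixes m v b :: "'a::real_inner"
  assumes "0 < G + l"
  defines "c \<equiv> (G / (G + l)) *\<^sub>R m + (l / (G + l)) *\<^sub>R b"
  shows "G * (norm (m - v))\<^sup>2 + l * (norm (v - b))\<^sup>2
           = G * l / (G + l) * (norm (m - b))\<^sup>2 + (G + l) * (norm (v - c))\<^sup>2"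
proof -
  define A B where "A = G / (G + l)" and "B = l / (G + l)"
  define d e where "d = m - b" and "e = v - c"
  have "A + B = 1" using assms by (simp add: A_def B_def add_divide_distrib[symmetric])
  then have "m - v = B *\<^sub>R d - e" "v - b = A *\<^sub>R d + e"
    by (simp_all add: c_def d_def e_def A_def[symmetric] B_def[symmetric] algebra_simps flip: scaleR_add_left)
  then have mv: "(norm (m - v))\<^sup>2 = B\<^sup>2 * (norm d)\<^sup>2 - 2 * B * (d \<bullet> e) + (norm e)\<^sup>2"
    and vb: "(norm (v - b))\<^sup>2 = A\<^sup>2 * (norm d)\<^sup>2 + 2 * A * (d \<bullet> e) + (norm e)\<^sup>2"
    by (simp_all only: power2_norm_eq_inner)
      (simp_all add: inner_add_left inner_add_right inner_diff_left inner_diff_right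
        inner_commute power2_eq_square)
  have "G * (norm (m - v))\<^sup>2 + l * (norm (v - b))\<^sup>2
      = (G * B\<^sup>2 + l * A\<^sup>2) * (norm d)\<^sup>2 + 2 * (l * A - G * B) * (d \<bullet> e) + (G + l) * (norm e)\<^sup>2"
    unfolding mv vb by (simp add: algebra_simps)
  also have "l * A - G * B = 0"
    by (simp add: A_def B_def)
  also have "G * B\<^sup>2 + l * A\<^sup>2 = G * l / (G + l)"
  proof -
    have "G * B\<^sup>2 + l * A\<^sup>2 = G * l * (G + l) / (G + l)\<^sup>2"
      by (simp add: A_def B_def power_divide add_divide_distrib algebra_simps power2_eq_square)
    then show ?thesis
      using assms by (simp add: power2_eq_square)
  qed
  finally show ?thesis
    by (simp add: d_def e_def)
qed

definition cluster_cost ::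
  "(nat \<Rightarrow> nat set) \<Rightarrow> (nat \<Rightarrow> 'a::real_normed_vector \<Rightarrow> real) \<Rightarrow> (nat \<Rightarrow> real) \<Rightarrow> (nat \<Rightarrow> 'a) \<Rightarrow> nat \<Rightarrow> real" where
  "cluster_cost I f \<gamma> \<theta> j =
     (\<Sum>i\<in>I j. f i (\<theta> i) + \<gamma> i / 2 * (norm (\<theta> i - cluster_mean I \<gamma> \<theta> j))\<^sup>2)"

lemma sum_sq_dist_cluster_mean:
  fixes \<theta> :: "nat \<Rightarrow> 'a::real_inner"
  assumes "sum \<gamma> (I j) \<noteq> 0"
  shows "(\<Sum>i\<in>I j. \<gamma> i / 2 * (norm (\<theta> i - y))\<^sup>2)
           = (\<Sum>i\<in>I j. \<gamma> i / 2 * (norm (\<theta> i - cluster_mean I \<gamma> \<theta> j))\<^sup>2)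
             + sum \<gamma> (I j) / 2 * (norm (cluster_mean I \<gamma> \<theta> j - y))\<^sup>2"
  using sum_weighted_sq_dist_decomp[OF assms, of \<theta> y]
  by (simp add: cluster_mean_def sum_divide_distrib[symmetric])

lemma F_obj_eq_cluster_costs:
  fixes \<theta> :: "nat \<Rightarrow> 'a::real_inner"
  assumes "\<And>j. j < k \<Longrightarrow> sum \<gamma> (I j) \<noteq> 0"
  shows "F_obj k I f \<alpha> \<gamma> \<theta> = (\<Sum>j<k. cluster_cost I f \<gamma> \<theta> j
           + \<alpha> j * sum \<gamma> (I j) / 2 * (norm (cluster_mean I \<gamma> \<theta> j - global_mean k I \<alpha> \<gamma> \<theta>))\<^sup>2)"
proof -
  let ?m = "cluster_mean I \<gamma> \<theta>" and ?g = "global_mean k I \<alpha> \<gamma> \<theta>"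
  let ?d = "\<lambda>y i. \<gamma> i / 2 * (norm (\<theta> i - y))\<^sup>2"
  have "(\<Sum>i\<in>I j. f i (\<theta> i) + (1 - \<alpha> j) * \<gamma> i / 2 * (norm (\<theta> i - ?m j))\<^sup>2
                   + \<alpha> j * \<gamma> i / 2 * (norm (\<theta> i - ?g))\<^sup>2)
      = cluster_cost I f \<gamma> \<theta> j + \<alpha> j * sum \<gamma> (I j) / 2 * (norm (?m j - ?g))\<^sup>2" if "j < k" for j
  proof -
    have "(\<Sum>i\<in>I j. f i (\<theta> i) + (1 - \<alpha> j) * \<gamma> i / 2 * (norm (\<theta> i - ?m j))\<^sup>2
                     + \<alpha> j * \<gamma> i / 2 * (norm (\<theta> i - ?g))\<^sup>2)
        = cluster_cost I f \<gamma> \<theta> j + \<alpha> j * ((\<Sum>i\<in>I j. ?d ?g i) - (\<Sum>i\<in>I j. ?d (?m j) i))"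
      by (simp add: cluster_cost_def sum.distrib sum_subtractf sum_distrib_left ring_distribs
          diff_divide_distrib mult.assoc)
    also have "\<dots> = cluster_cost I f \<gamma> \<theta> j + \<alpha> j * sum \<gamma> (I j) / 2 * (norm (?m j - ?g))\<^sup>2"
      using sum_sq_dist_cluster_mean[where y = ?g] assms[OF that] by simp
    finally show ?thesis .
  qed
  then show ?thesis
    unfolding F_obj_def by (intro sum.cong) auto
qed

lemma F_MTL_eq_cluster_costs:
  fixes \<theta> :: "nat \<Rightarrow> 'a::real_inner"
  assumes "\<And>j. j < k \<Longrightarrow> sum \<gamma> (I j) \<noteq> 0"
  shows "F_MTL k I f lam \<gamma> \<theta> v b = (\<Sum>j<k. cluster_cost I f \<gamma> \<theta> j
           + sum \<gamma> (I j) / 2 * (norm (cluster_mean I \<gamma> \<theta> j - v j))\<^sup>2 + lam j / 2 * (norm (v j - b))\<^sup>2)"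
proof -
  have "(\<Sum>i\<in>I j. \<gamma> i / 2 * (norm (\<theta> i - v j))\<^sup>2)
      = (\<Sum>i\<in>I j. \<gamma> i / 2 * (norm (\<theta> i - cluster_mean I \<gamma> \<theta> j))\<^sup>2)
        + sum \<gamma> (I j) / 2 * (norm (cluster_mean I \<gamma> \<theta> j - v j))\<^sup>2" if "j < k" for j
    using assms[OF that] by (rule sum_sq_dist_cluster_mean)
  then show ?thesis
    unfolding F_MTL_def cluster_cost_def by (intro sum.cong) (simp_all add: sum.distrib)
qed

lemma global_mean_eq_weighted_cluster_means:
  assumes "\<And>j. j < k \<Longrightarrow> sum \<gamma> (I j) \<noteq> 0"
  shows "global_mean k I \<alpha> \<gamma> \<theta>
           = (\<Sum>j<k. (\<alpha> j * sum \<gamma> (I j)) *\<^sub>R cluster_mean I \<gamma> \<theta> j) /\<^sub>R (\<Sum>j<k. \<alpha> j * sum \<gamma> (I j))"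
proof -
  have "(\<Sum>i\<in>I j. (\<alpha> j * \<gamma> i) *\<^sub>R \<theta> i) = (\<alpha> j * sum \<gamma> (I j)) *\<^sub>R cluster_mean I \<gamma> \<theta> j" if "j < k" for j
  proof -
    have "(\<Sum>i\<in>I j. (\<alpha> j * \<gamma> i) *\<^sub>R \<theta> i) = \<alpha> j *\<^sub>R (\<Sum>i\<in>I j. \<gamma> i *\<^sub>R \<theta> i)"
      by (simp add: scaleR_sum_right)
    then show ?thesis
      using assms[OF that] by (simp add: cluster_mean_def)
  qed
  then show ?thesis
    by (simp add: global_mean_def sum_distrib_left)
qed

definition shrunk_cluster_mean ::
  "(nat \<Rightarrow> nat set) \<Rightarrow> (nat \<Rightarrow> real) \<Rightarrow> (nat \<Rightarrow> real) \<Rightarrow> (nat \<Rightarrow> 'a::real_vector) \<Rightarrow> 'a \<Rightarrow> nat \<Rightarrow> 'a" where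
  "shrunk_cluster_mean I \<gamma> lam \<theta> b j =
     (sum \<gamma> (I j) / (sum \<gamma> (I j) + lam j)) *\<^sub>R cluster_mean I \<gamma> \<theta> j + (lam j / (sum \<gamma> (I j) + lam j)) *\<^sub>R b"

lemma F_MTL_eq_F_obj_plus_sq_dists:
  fixes \<theta> :: "nat \<Rightarrow> 'a::real_inner" and I :: "nat \<Rightarrow> nat set" and \<gamma> lam :: "nat \<Rightarrow> real"
  defines "\<alpha> \<equiv> \<lambda>j. lam j / (lam j + sum \<gamma> (I j))"
  assumes cluster_weight_pos: "\<And>j. j < k \<Longrightarrow> 0 < sum \<gamma> (I j)"
    and lam_nonneg: "\<And>j. j < k \<Longrightarrow> 0 \<le> lam j"
    and total_weight_nonzero: "(\<Sum>j<k. \<alpha> j * sum \<gamma> (I j)) \<noteq> 0"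
  shows "F_MTL k I f lam \<gamma> \<theta> v b = F_obj k I f \<alpha> \<gamma> \<theta>
           + (\<Sum>j<k. (sum \<gamma> (I j) + lam j) / 2 * (norm (v j - shrunk_cluster_mean I \<gamma> lam \<theta> b j))\<^sup>2)
           + (\<Sum>j<k. \<alpha> j * sum \<gamma> (I j)) / 2 * (norm (global_mean k I \<alpha> \<gamma> \<theta> - b))\<^sup>2"
proof -
  let ?m = "cluster_mean I \<gamma> \<theta>" and ?c = "\<lambda>j. \<alpha> j * sum \<gamma> (I j)" and ?g = "global_mean k I \<alpha> \<gamma> \<theta>"
  let ?r = "\<lambda>j. (sum \<gamma> (I j) + lam j) / 2 * (norm (v j - shrunk_cluster_mean I \<gamma> lam \<theta> b j))\<^sup>2"
  have cluster_weight_nonzero: "\<And>j. j < k \<Longrightarrow> sum \<gamma> (I j) \<noteq> 0"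
    using cluster_weight_pos by (metis less_irrefl)
  have two_weight: "sum \<gamma> (I j) / 2 * (norm (?m j - v j))\<^sup>2 + lam j / 2 * (norm (v j - b))\<^sup>2
      = ?c j / 2 * (norm (?m j - b))\<^sup>2 + ?r j" if "j < k" for j
    using two_weight_sq_dist_decomp[of "sum \<gamma> (I j)" "lam j" "?m j" "v j" b]
      cluster_weight_pos[OF that] lam_nonneg[OF that]
    by (simp add: \<alpha>_def shrunk_cluster_mean_def field_simps)
  have "(\<Sum>j<k. ?c j * (norm (?m j - b))\<^sup>2) = (\<Sum>j<k. ?c j * (norm (?m j - ?g))\<^sup>2) + sum ?c {..<k} * (norm (?g - b))\<^sup>2"
    using sum_weighted_sq_dist_decomp[OF total_weight_nonzero, of ?m b]
    by (simp add: global_mean_eq_weighted_cluster_means[OF cluster_weight_nonzero])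
  then have between_clusters: "(\<Sum>j<k. ?c j / 2 * (norm (?m j - b))\<^sup>2)
      = (\<Sum>j<k. ?c j / 2 * (norm (?m j - ?g))\<^sup>2) + sum ?c {..<k} / 2 * (norm (?g - b))\<^sup>2"
    by (simp add: sum_divide_distrib[symmetric] add_divide_distrib)
  have "F_MTL k I f lam \<gamma> \<theta> v b = (\<Sum>j<k. cluster_cost I f \<gamma> \<theta> j + ?c j / 2 * (norm (?m j - b))\<^sup>2 + ?r j)"
    using cluster_weight_nonzero two_weight by (simp add: F_MTL_eq_cluster_costs add.assoc)
  also have "\<dots> = (\<Sum>j<k. cluster_cost I f \<gamma> \<theta> j + ?c j / 2 * (norm (?m j - ?g))\<^sup>2) + sum ?r {..<k}
      + sum ?c {..<k} / 2 * (norm (?g - b))\<^sup>2"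
    using between_clusters by (simp add: sum.distrib)
  also have "\<dots> = F_obj k I f \<alpha> \<gamma> \<theta> + sum ?r {..<k} + sum ?c {..<k} / 2 * (norm (?g - b))\<^sup>2"
    using cluster_weight_nonzero by (simp add: F_obj_eq_cluster_costs mult.assoc)
  finally show ?thesis .
qed

lemma F_obj_le_F_MTL:
  fixes \<theta> :: "nat \<Rightarrow> 'a::real_inner" and I :: "nat \<Rightarrow> nat set" and \<gamma> lam :: "nat \<Rightarrow> real"
  defines "\<alpha> \<equiv> \<lambda>j. lam j / (lam j + sum \<gamma> (I j))"
  assumes "\<And>j. j < k \<Longrightarrow> 0 < sum \<gamma> (I j)" and "\<And>j. j < k \<Longrightarrow> 0 \<le> lam j"
    and "0 < (\<Sum>j<k. \<alpha> j * sum \<gamma> (I j))"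
  shows "F_obj k I f \<alpha> \<gamma> \<theta> \<le> F_MTL k I f lam \<gamma> \<theta> v b"
proof -
  have "0 \<le> (\<Sum>j<k. (sum \<gamma> (I j) + lam j) / 2 * (norm (v j - shrunk_cluster_mean I \<gamma> lam \<theta> b j))\<^sup>2)"
    using assms(2,3) by (intro sum_nonneg) (simp add: add_nonneg_nonneg less_imp_le)
  moreover have "0 \<le> (\<Sum>j<k. \<alpha> j * sum \<gamma> (I j)) / 2 * (norm (global_mean k I \<alpha> \<gamma> \<theta> - b))\<^sup>2"
    using assms(4) by simp
  moreover have "F_MTL k I f lam \<gamma> \<theta> v b = F_obj k I f \<alpha> \<gamma> \<theta>
      + (\<Sum>j<k. (sum \<gamma> (I j) + lam j) / 2 * (norm (v j - shrunk_cluster_mean I \<gamma> lam \<theta> b j))\<^sup>2)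
      + (\<Sum>j<k. \<alpha> j * sum \<gamma> (I j)) / 2 * (norm (global_mean k I \<alpha> \<gamma> \<theta> - b))\<^sup>2"
    unfolding \<alpha>_def by (rule F_MTL_eq_F_obj_plus_sq_dists) (use assms in \<open>auto simp: \<alpha>_def\<close>)
  ultimately show ?thesis
    by linarith
qed

lemma F_MTL_attains_F_obj:
  fixes \<theta> :: "nat \<Rightarrow> 'a::real_inner" and k :: nat and I :: "nat \<Rightarrow> nat set" and \<gamma> lam :: "nat \<Rightarrow> real"
  defines "\<alpha> \<equiv> \<lambda>j. lam j / (lam j + sum \<gamma> (I j))"
  defines "g \<equiv> global_mean k I \<alpha> \<gamma> \<theta>"
  assumes "\<And>j. j < k \<Longrightarrow> 0 < sum \<gamma> (I j)" and "\<And>j. j < k \<Longrightarrow> 0 \<le> lam j"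
    and "(\<Sum>j<k. \<alpha> j * sum \<gamma> (I j)) \<noteq> 0"
  shows "F_MTL k I f lam \<gamma> \<theta> (shrunk_cluster_mean I \<gamma> lam \<theta> g) g = F_obj k I f \<alpha> \<gamma> \<theta>"
  unfolding \<alpha>_def g_def
  by (subst F_MTL_eq_F_obj_plus_sq_dists) (use assms in \<open>auto simp: \<alpha>_def shrunk_cluster_mean_def\<close>)

lemma strongly_convex_midpoint:
  assumes "strongly_convex \<mu> f"
  shows "f (midpoint x y) \<le> (f x + f y) / 2 - \<mu> / 8 * (norm (x - y))\<^sup>2"
  using assms[unfolded strongly_convex_def, rule_format, of "1/2" x y]
  by (simp add: midpoint_def scaleR_add_right add_divide_distrib)

lemma sq_dist_midpoints_le:
  fixes a b c d :: "'a::real_inner"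
  shows "(norm (midpoint a b - midpoint c d))\<^sup>2 \<le> ((norm (a - c))\<^sup>2 + (norm (b - d))\<^sup>2) / 2"
proof -
  have parallelogram: "(norm (midpoint u w))\<^sup>2 = ((norm u)\<^sup>2 + (norm w)\<^sup>2) / 2 - (norm (u - w))\<^sup>2 / 4" for u w :: 'a
    by (simp only: midpoint_def power2_norm_eq_inner)
      (simp add: inner_add_left inner_add_right inner_diff_left inner_diff_right inner_commute field_simps)
  have shift: "midpoint a b - midpoint c d = midpoint (a - c) (b - d)"
    by (simp add: midpoint_def algebra_simps)
  show ?thesis
    unfolding shift using parallelogram[of "a - c" "b - d"] zero_le_power2[of "norm (a - c - (b - d))"] by linarith
qed

lemma F_MTL_midpoint_le:
  fixes \<theta> \<theta>' v v' :: "nat \<Rightarrow> 'a::real_inner"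
  assumes f_convex: "\<And>j i. j < k \<Longrightarrow> i \<in> I j \<Longrightarrow> strongly_convex \<mu> (f i)"
    and gamma_nonneg: "\<And>j i. j < k \<Longrightarrow> i \<in> I j \<Longrightarrow> 0 \<le> \<gamma> i"
    and lam_nonneg: "\<And>j. j < k \<Longrightarrow> 0 \<le> lam j"
  shows "F_MTL k I f lam \<gamma> (\<lambda>i. midpoint (\<theta> i) (\<theta>' i)) (\<lambda>j. midpoint (v j) (v' j)) (midpoint b b')
           \<le> (F_MTL k I f lam \<gamma> \<theta> v b + F_MTL k I f lam \<gamma> \<theta>' v' b') / 2
             - \<mu> / 8 * (\<Sum>j<k. \<Sum>i\<in>I j. (norm (\<theta> i - \<theta>' i))\<^sup>2)"
proof -
  let ?t = "\<lambda>\<theta> v j i. f i (\<theta> i) + \<gamma> i / 2 * (norm (\<theta> i - v j))\<^sup>2"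
  let ?q = "\<lambda>v b j. lam j / 2 * (norm (v j - b))\<^sup>2"
  have "F_MTL k I f lam \<gamma> (\<lambda>i. midpoint (\<theta> i) (\<theta>' i)) (\<lambda>j. midpoint (v j) (v' j)) (midpoint b b')
      \<le> (\<Sum>j<k. (\<Sum>i\<in>I j. (?t \<theta> v j i + ?t \<theta>' v' j i) / 2 - \<mu> / 8 * (norm (\<theta> i - \<theta>' i))\<^sup>2)
                + (?q v b j + ?q v' b' j) / 2)"
    unfolding F_MTL_def
  proof (intro sum_mono add_mono)
    fix j i assume j: "j \<in> {..<k}" and i: "i \<in> I j"
    have "\<gamma> i / 2 * (norm (midpoint (\<theta> i) (\<theta>' i) - midpoint (v j) (v' j)))\<^sup>2
        \<le> \<gamma> i / 2 * (((norm (\<theta> i - v j))\<^sup>2 + (norm (\<theta>' i - v' j))\<^sup>2) / 2)"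
      using gamma_nonneg j i by (intro mult_left_mono sq_dist_midpoints_le) auto
    then show "f i (midpoint (\<theta> i) (\<theta>' i)) + \<gamma> i / 2 * (norm (midpoint (\<theta> i) (\<theta>' i) - midpoint (v j) (v' j)))\<^sup>2
        \<le> (?t \<theta> v j i + ?t \<theta>' v' j i) / 2 - \<mu> / 8 * (norm (\<theta> i - \<theta>' i))\<^sup>2"
      using strongly_convex_midpoint[OF f_convex, of j i "\<theta> i" "\<theta>' i"] j i by (simp add: field_simps)
  next
    fix j assume j: "j \<in> {..<k}"
    have "lam j / 2 * (norm (midpoint (v j) (v' j) - midpoint b b'))\<^sup>2
        \<le> lam j / 2 * (((norm (v j - b))\<^sup>2 + (norm (v' j - b'))\<^sup>2) / 2)"
      using lam_nonneg j by (intro mult_left_mono sq_dist_midpoints_le) auto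
    then show "lam j / 2 * (norm (midpoint (v j) (v' j) - midpoint b b'))\<^sup>2 \<le> (?q v b j + ?q v' b' j) / 2"
      by (simp add: field_simps)
  qed
  also have "\<dots> = (F_MTL k I f lam \<gamma> \<theta> v b + F_MTL k I f lam \<gamma> \<theta>' v' b') / 2
             - \<mu> / 8 * (\<Sum>j<k. \<Sum>i\<in>I j. (norm (\<theta> i - \<theta>' i))\<^sup>2)"
    unfolding F_MTL_def
    by (simp add: sum.distrib sum_subtractf sum_distrib_left sum_divide_distrib[symmetric] add_divide_distrib algebra_simps)
  finally show ?thesis .
qed

lemma F_MTL_minimizers_share_models:
  fixes \<theta>1 \<theta>2 v1 v2 :: "nat \<Rightarrow> 'a::real_inner"
  assumes "\<And>j i. j < k \<Longrightarrow> i \<in> I j \<Longrightarrow> strongly_convex \<mu> (f i)"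
    and "\<And>j i. j < k \<Longrightarrow> i \<in> I j \<Longrightarrow> 0 \<le> \<gamma> i"
    and "\<And>j. j < k \<Longrightarrow> 0 \<le> lam j"
    and mu_pos: "0 < \<mu>"
    and finite_clusters: "\<And>j. j < k \<Longrightarrow> finite (I j)"
    and minimizer: "\<And>\<theta> v b. F_MTL k I f lam \<gamma> \<theta>1 v1 b1 \<le> F_MTL k I f lam \<gamma> \<theta> v b"
    and other_minimizer: "F_MTL k I f lam \<gamma> \<theta>2 v2 b2 \<le> F_MTL k I f lam \<gamma> \<theta>1 v1 b1"
    and "j < k" "i \<in> I j"
  shows "\<theta>1 i = \<theta>2 i"
proof -
  let ?d = "\<lambda>i. (norm (\<theta>1 i - \<theta>2 i))\<^sup>2"
  have "F_MTL k I f lam \<gamma> (\<lambda>i. midpoint (\<theta>1 i) (\<theta>2 i)) (\<lambda>j. midpoint (v1 j) (v2 j)) (midpoint b1 b2)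
      \<le> (F_MTL k I f lam \<gamma> \<theta>1 v1 b1 + F_MTL k I f lam \<gamma> \<theta>2 v2 b2) / 2 - \<mu> / 8 * (\<Sum>j<k. \<Sum>i\<in>I j. ?d i)"
    by (rule F_MTL_midpoint_le) (use assms in auto)
  then have "\<mu> / 8 * (\<Sum>j<k. \<Sum>i\<in>I j. ?d i) \<le> 0"
    using minimizer[of "\<lambda>i. midpoint (\<theta>1 i) (\<theta>2 i)" "\<lambda>j. midpoint (v1 j) (v2 j)" "midpoint b1 b2"]
      other_minimizer
    by argo
  then have "(\<Sum>j<k. \<Sum>i\<in>I j. ?d i) = 0"
    using mu_pos by (simp add: mult_le_0_iff sum_nonneg order_antisym)
  then have "(\<Sum>i\<in>I j. ?d i) = 0"
    using \<open>j < k\<close> by (simp add: sum_nonneg_eq_0_iff sum_nonneg)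
  then show ?thesis
    using finite_clusters \<open>j < k\<close> \<open>i \<in> I j\<close> by (simp add: sum_nonneg_eq_0_iff)
qed

theorem proposition2p1:
  fixes n k :: nat
    and I :: "nat \<Rightarrow> nat set"
    and f :: "nat \<Rightarrow> 'a::euclidean_space \<Rightarrow> real"
    and \<mu> L :: real
    and \<gamma> lam :: "nat \<Rightarrow> real"
    and \<theta>' w :: "nat \<Rightarrow> 'a" and wbar :: 'a
    and \<theta>hat :: "nat \<Rightarrow> 'a"
  assumes clusters_nonempty: "\<And>j. j < k \<Longrightarrow> I j \<noteq> {}"
    and clusters_disjoint: "\<And>j j'. j < k \<Longrightarrow> j' < k \<Longrightarrow> j \<noteq> j' \<Longrightarrow> I j \<inter> I j' = {}"
    and clusters_cover: "(\<Union>j<k. I j) = {..<n}"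
    and mu_pos: "0 < \<mu>" and mu_le_L: "\<mu> \<le> L"
    and f_strongly_convex: "\<And>i. i < n \<Longrightarrow> strongly_convex \<mu> (f i)"
    and f_smooth: "\<And>i. i < n \<Longrightarrow> L_smooth L (f i)"
    and gamma_pos: "\<And>i. i < n \<Longrightarrow> 0 < \<gamma> i"
    and lambda_nonneg: "\<And>j. j < k \<Longrightarrow> 0 \<le> lam j"
    and lambda_not_all_zero: "\<exists>j<k. lam j \<noteq> 0"
    and MTL_min: "\<And>\<theta> v vbar. F_MTL k I f lam \<gamma> \<theta>' w wbar \<le> F_MTL k I f lam \<gamma> \<theta> v vbar"
    and F_min: "\<And>\<Theta>. F_obj k I f (\<lambda>j. lam j / (lam j + (\<Sum>i\<in>I j. \<gamma> i))) \<gamma> \<theta>hat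
                      \<le> F_obj k I f (\<lambda>j. lam j / (lam j + (\<Sum>i\<in>I j. \<gamma> i))) \<gamma> \<Theta>"
  shows "\<forall>i<n. \<theta>hat i = \<theta>' i"
proof -
  let ?\<alpha> = "\<lambda>j. lam j / (lam j + (\<Sum>i\<in>I j. \<gamma> i))"
  have in_clients: "\<And>j i. j < k \<Longrightarrow> i \<in> I j \<Longrightarrow> i < n"
    using clusters_cover by blast
  then have finite_clusters: "\<And>j. j < k \<Longrightarrow> finite (I j)"
    by (meson finite_lessThan finite_subset lessThan_iff subsetI)
  have cluster_weight_pos: "\<And>j. j < k \<Longrightarrow> 0 < sum \<gamma> (I j)"
    using finite_clusters clusters_nonempty gamma_pos in_clients by (meson sum_pos)
  obtain j0 where "j0 < k" "0 < lam j0"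
    using lambda_not_all_zero lambda_nonneg by (metis less_le)
  moreover have "0 \<le> ?\<alpha> j * sum \<gamma> (I j)" if "j < k" for j
    using cluster_weight_pos[OF that] lambda_nonneg[OF that] by simp
  ultimately have total_weight_pos: "0 < (\<Sum>j<k. ?\<alpha> j * sum \<gamma> (I j))"
    using cluster_weight_pos[of j0] by (intro sum_pos2[of _ j0]) auto
  obtain W B where "F_MTL k I f lam \<gamma> \<theta>hat W B = F_obj k I f ?\<alpha> \<gamma> \<theta>hat"
    using F_MTL_attains_F_obj[OF cluster_weight_pos lambda_nonneg] total_weight_pos by fastforce
  moreover have "F_obj k I f ?\<alpha> \<gamma> \<theta>' \<le> F_MTL k I f lam \<gamma> \<theta>' w wbar"
    using F_obj_le_F_MTL[OF cluster_weight_pos lambda_nonneg total_weight_pos] .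
  ultimately have "F_MTL k I f lam \<gamma> \<theta>hat W B \<le> F_MTL k I f lam \<gamma> \<theta>' w wbar"
    using F_min[of \<theta>'] by linarith
  then have "\<theta>' i = \<theta>hat i" if "j < k" "i \<in> I j" for i j
    using F_MTL_minimizers_share_models[OF _ _ lambda_nonneg mu_pos finite_clusters MTL_min _ that]
      f_strongly_convex gamma_pos in_clients by (meson less_imp_le)
  then show ?thesis
    using clusters_cover by (metis UN_iff lessThan_iff)
qed

end
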